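(* For real numbers $x\ge y\ge2$ we have $$ \Phi(x,y)\le\frac1{\log x}\int_1^x\frac{\Phi(t,y)}{t}\,dt+\frac1{\log x}\sum_{\substack{d\le x\\P(\varphi(d))\le y}}\Phi\left(\frac xd,y\right)\Lambda(d), $$ where the sum is over positive integers $d\le x$ with $P(\varphi(d))\le y$.
   Context: $\varphi$ is Euler's totient function and $\Lambda$ is the von Mangoldt function. $P(n)$ denotes the largest prime factor of an integer $n>1$, with $P(1)=1$. For real $t\ge1$ and $y\ge2$, $\Phi(t,y)$ denotes the number of positive integers $n\le t$ with $P(\varphi(n))\le y$. *)

theory Defs
  imports "HOL-Analysis.Analysis" "HOL-Number_Theory.Number_Theory"
begin

definition gpf :: "nat \<Rightarrow> nat" where
  "gpf n = (if n \<le> 1 then 1 else Max (prime_factors n))"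

definition mangoldt :: "nat \<Rightarrow> real" where
  "mangoldt n = (if \<exists>p k. prime p \<and> k \<ge> 1 \<and> n = p ^ k
                 then ln (real (THE p. prime p \<and> (\<exists>k\<ge>1. n = p ^ k))) else 0)"

definition Phi :: "real \<Rightarrow> real \<Rightarrow> nat" where
  "Phi t y = card {n::nat. 1 \<le> n \<and> real n \<le> t \<and> real (gpf (totient n)) \<le> y}"

end

theory Submission imports Defs begin

text \<open>Let \<open>S\<close> be the set of \<open>n \<le> x\<close> with \<open>P(\<phi>(n)) \<le> y\<close> and write
  \<open>\<Phi>(x,y) log x\<close> as the sum over \<open>S\<close> of \<open>log (x/n)\<close> plus the sum over \<open>S\<close> of \<open>log n\<close>.
  By partial summation the first sum is the integral of \<open>\<Phi>(t,y)/t\<close> over \<open>[1,x]\<close>. In the second,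
  expand \<open>log n\<close> as the sum of \<open>\<Lambda>(d)\<close> over \<open>d | n\<close> and swap the sums. As \<open>\<phi>(d) | \<phi>(n)\<close>
  whenever \<open>d | n\<close>, the condition \<open>P(\<phi>(n)) \<le> y\<close> passes to divisors: so \<open>d\<close> ranges over \<open>S\<close>,
  and the multiples \<open>n = d m\<close> of \<open>d\<close> in \<open>S\<close> number at most \<open>\<Phi>(x/d,y)\<close>, since \<open>m\<close> satisfies
  the condition too.\<close>

lemma mangoldt_eq_Prime_Powers_mangoldt: "mangoldt n = (Prime_Powers.mangoldt n :: real)"
proof (cases "primepow n")
  case True
  then obtain p k where p: "prime p" "k > 0" "n = p ^ k" by (auto simp: primepow_def)
  then have n_prime_power: "prime p \<and> (\<exists>j\<ge>1. n = p ^ j)" by (metis Suc_leI One_nat_def)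
  have "(THE q. prime q \<and> (\<exists>j\<ge>1. n = q ^ j)) = p"
  proof (rule the_equality)
    fix q assume "prime q \<and> (\<exists>j\<ge>1. n = q ^ j)"
    then obtain j where "prime q" "j \<ge> 1" "p ^ k = q ^ j" using p by auto
    then show "q = p" using prime_power_inj''[of p q k j] p by auto
  qed (fact n_prime_power)
  moreover have "\<exists>p k. prime p \<and> k \<ge> 1 \<and> n = p ^ k" using n_prime_power by blast
  ultimately show ?thesis using p by (simp add: mangoldt_def)
next
  case False
  then have "\<not> (\<exists>p k. prime p \<and> k \<ge> 1 \<and> n = p ^ k)"
    unfolding primepow_def by (metis Suc_le_eq One_nat_def)
  then show ?thesis using False by (auto simp: mangoldt_def Prime_Powers.mangoldt_def)
qed

lemma gpf_eq_Max_insert_1: "n > 0 \<Longrightarrow> gpf n = Max (insert 1 (prime_factors n))"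
proof (cases "n = 1")
  case False
  assume "n > 0"
  with False obtain p where p: "p \<in> prime_factors n"
    using prime_factor_nat[of n] by (auto simp: in_prime_factors_iff)
  have "1 \<le> p" using p prime_ge_1_nat by (simp add: in_prime_factors_iff)
  also have "p \<le> Max (prime_factors n)" using p by (intro Max_ge) simp_all
  finally have "Max (insert 1 (prime_factors n)) = Max (prime_factors n)"
    using p by (subst Max_insert) auto
  then show ?thesis using False \<open>n > 0\<close> by (simp add: gpf_def)
qed (simp add: gpf_def)

lemma gpf_mono_dvd:
  assumes "a dvd b" "b > 0"
  shows "gpf a \<le> gpf b"
proof -
  have "a > 0" using assms by (auto intro: Nat.gr0I)
  then show ?thesis
    using assms dvd_prime_factors[of b a]
    by (auto simp: gpf_eq_Max_insert_1 intro!: Max_mono)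
qed

definition divisor_closed :: "(nat \<Rightarrow> bool) \<Rightarrow> bool" where
  "divisor_closed Q \<longleftrightarrow> (\<forall>n d. Q n \<and> n > 0 \<and> d dvd n \<longrightarrow> Q d)"

lemma divisor_closedD: "divisor_closed Q \<Longrightarrow> Q n \<Longrightarrow> n > 0 \<Longrightarrow> d dvd n \<Longrightarrow> Q d"
  unfolding divisor_closed_def by blast

lemma divisor_closed_gpf_totient_le: "divisor_closed (\<lambda>n. real (gpf (totient n)) \<le> y)"
  unfolding divisor_closed_def
  by (auto intro: order_trans[OF of_nat_mono[OF gpf_mono_dvd[OF totient_dvd]]])

definition members_upto :: "(nat \<Rightarrow> bool) \<Rightarrow> real \<Rightarrow> nat set" where
  "members_upto Q t = {n. 1 \<le> n \<and> real n \<le> t \<and> Q n}"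

lemma finite_members_upto [simp]: "finite (members_upto Q t)"
proof (rule finite_subset)
  show "members_upto Q t \<subseteq> {..nat \<lfloor>t\<rfloor>}"
    by (auto simp: members_upto_def intro: le_nat_floor)
qed simp

lemma Phi_eq_card_members_upto:
  "Phi t y = card (members_upto (\<lambda>n. real (gpf (totient n)) \<le> y) t)"
  by (simp add: Phi_def members_upto_def)

lemma has_integral_inverse_from:
  fixes a b c :: real
  assumes "0 < c" "c \<le> a" "a \<le> b"
  shows "((\<lambda>t. if a \<le> t then 1 / t else 0) has_integral (ln b - ln a)) {c..b}"
proof -
  have "((\<lambda>t. 1 / t) has_integral (ln b - ln a)) {a..b}"
  proof (rule fundamental_theorem_of_calculus[OF assms(3)])
    fix t assume "t \<in> {a..b}"
    then have "(ln has_real_derivative 1 / t) (at t within {a..b})"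
      using assms by (auto intro!: derivative_eq_intros)
    then show "(ln has_vector_derivative 1 / t) (at t within {a..b})"
      by (simp add: has_real_derivative_iff_has_vector_derivative)
  qed
  then have "((\<lambda>t. if t \<in> cbox a b then 1 / t else 0) has_integral (ln b - ln a)) (cbox c b)"
    by (intro has_integral_restrict_closed_subinterval) (use assms in auto)
  then have "((\<lambda>t. if t \<in> {a..b} then 1 / t else 0) has_integral (ln b - ln a)) {c..b}"
    by (simp add: cbox_interval)
  then show ?thesis
    by (rule has_integral_eq[rotated]) auto
qed

lemma has_integral_card_members_upto_over_t:
  "((\<lambda>t. real (card (members_upto Q t)) / t) has_integral
     (\<Sum>n\<in>members_upto Q x. ln x - ln (real n))) {1..x}"
proof -
  let ?S = "members_upto Q x"
  have "((\<lambda>t. \<Sum>n\<in>?S. if real n \<le> t then 1 / t else 0) has_integral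
          (\<Sum>n\<in>?S. ln x - ln (real n))) {1..x}"
    by (intro has_integral_sum finite_members_upto has_integral_inverse_from)
       (auto simp: members_upto_def)
  then show ?thesis
  proof (rule has_integral_eq[rotated])
    fix t assume "t \<in> {1..x}"
    then have "{n\<in>?S. real n \<le> t} = members_upto Q t" by (auto simp: members_upto_def)
    then show "(\<Sum>n\<in>?S. if real n \<le> t then 1 / t else 0) = real (card (members_upto Q t)) / t"
      by (simp flip: sum.inter_filter)
  qed
qed

lemma divisor_in_members_upto:
  assumes "divisor_closed Q" "n \<in> members_upto Q x" "d dvd n"
  shows "d \<in> members_upto Q x"
proof -
  have "d > 0" "d \<le> n" using assms by (auto simp: members_upto_def intro: Nat.gr0I dvd_imp_le)
  then show ?thesis using assms by (auto simp: members_upto_def intro: divisor_closedD)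
qed

lemma card_multiples_in_members_upto_le:
  assumes "divisor_closed Q" "d > 0"
  shows "card {n \<in> members_upto Q x. d dvd n} \<le> card (members_upto Q (x / real d))"
proof (rule card_inj_on_le[where f = "\<lambda>n. n div d"])
  show "inj_on (\<lambda>n. n div d) {n \<in> members_upto Q x. d dvd n}"
    using assms(2) by (auto simp: inj_on_def elim!: dvdE)
  show "(\<lambda>n. n div d) ` {n \<in> members_upto Q x. d dvd n} \<subseteq> members_upto Q (x / real d)"
  proof
    fix m assume "m \<in> (\<lambda>n. n div d) ` {n \<in> members_upto Q x. d dvd n}"
    then obtain n where n: "n \<in> members_upto Q x" "n = d * m"
      using assms(2) by (auto elim!: dvdE)
    then have "1 \<le> m" "real d * real m \<le> x" "Q m"
      by (auto simp: members_upto_def intro: Nat.gr0I divisor_closedD[OF assms(1)])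
    then show "m \<in> members_upto Q (x / real d)"
      using assms(2) by (simp add: members_upto_def pos_le_divide_eq mult.commute)
  qed
qed simp

lemma sum_ln_le_sum_mangoldt:
  assumes "divisor_closed Q"
  shows "(\<Sum>n\<in>members_upto Q x. ln (real n))
           \<le> (\<Sum>d\<in>members_upto Q x. real (card (members_upto Q (x / real d))) * mangoldt d)"
proof -
  let ?S = "members_upto Q x"
  have "(\<Sum>n\<in>?S. ln (real n)) = (\<Sum>n\<in>?S. \<Sum>d\<in>?S. if d dvd n then mangoldt d else 0)"
  proof (rule sum.cong[OF refl])
    fix n assume n: "n \<in> ?S"
    then have "{d \<in> ?S. d dvd n} = {d. d dvd n}"
      using divisor_in_members_upto[OF assms] by auto
    then have "(\<Sum>d\<in>?S. if d dvd n then mangoldt d else 0) = (\<Sum>d | d dvd n. Prime_Powers.mangoldt d)"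
      by (simp add: sum.inter_filter[symmetric] mangoldt_eq_Prime_Powers_mangoldt)
    also have "\<dots> = ln (real n)"
      using n mangoldt_sum[of n, where 'a = real] by (simp add: members_upto_def)
    finally show "ln (real n) = (\<Sum>d\<in>?S. if d dvd n then mangoldt d else 0)" ..
  qed
  also have "\<dots> = (\<Sum>d\<in>?S. real (card {n \<in> ?S. d dvd n}) * mangoldt d)"
    by (subst sum.swap) (simp add: sum.inter_filter[symmetric])
  also have "\<dots> \<le> (\<Sum>d\<in>?S. real (card (members_upto Q (x / real d))) * mangoldt d)"
    using card_multiples_in_members_upto_le[OF assms]
    by (intro sum_mono mult_right_mono)
       (auto simp: members_upto_def mangoldt_eq_Prime_Powers_mangoldt mangoldt_nonneg)
  finally show ?thesis .
qed

theorem lemma3p1: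
  fixes x y :: real
  assumes "2 \<le> y" and "y \<le> x"
  shows "real (Phi x y) \<le>
           (1 / ln x) * integral {1..x} (\<lambda>t. real (Phi t y) / t)
         + (1 / ln x) * (\<Sum>d \<in> {d::nat. 1 \<le> d \<and> real d \<le> x \<and> real (gpf (totient d)) \<le> y}.
                            real (Phi (x / real d) y) * mangoldt d)"
proof -
  let ?Q = "\<lambda>n. real (gpf (totient n)) \<le> y"
  let ?S = "members_upto ?Q x"
  have integral: "integral {1..x} (\<lambda>t. real (Phi t y) / t) = (\<Sum>n\<in>?S. ln x - ln (real n))"
    unfolding Phi_eq_card_members_upto by (rule integral_unique has_integral_card_members_upto_over_t)+
  have "real (Phi x y) * ln x = (\<Sum>n\<in>?S. ln x - ln (real n)) + (\<Sum>n\<in>?S. ln (real n))"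
    by (simp add: Phi_eq_card_members_upto sum_subtractf)
  also have "\<dots> \<le> integral {1..x} (\<lambda>t. real (Phi t y) / t)
                  + (\<Sum>d\<in>?S. real (Phi (x / real d) y) * mangoldt d)"
    unfolding integral
    using sum_ln_le_sum_mangoldt[OF divisor_closed_gpf_totient_le, of y x]
    by (simp add: Phi_eq_card_members_upto)
  finally have "real (Phi x y) \<le> (integral {1..x} (\<lambda>t. real (Phi t y) / t)
                  + (\<Sum>d\<in>?S. real (Phi (x / real d) y) * mangoldt d)) / ln x"
    using assms by (simp add: pos_le_divide_eq)
  then show ?thesis by (simp add: add_divide_distrib members_upto_def)
qed

end
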